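(* For every word $w\in\mathcal{M}_n^e$: \[ Q_+w=\sum_{T\subseteq E^y_w}(-1)^{|T|}\psi^y_Tw,\qquad Q_+^{-1}w=\sum_{w'\le w}w', \] \[ Q_-w=\sum_{T\subseteq E^x_w}(-1)^{|T|}\psi^x_Tw,\qquad Q_-^{-1}w=\sum_{w'\ge w}w', \] where the sums over $w'$ range over words in $\mathcal{M}_n^e$. In particular $Q_\pm$ and their inverses have integer coefficients.
   Context: $\mathcal{M}_n^e$ is the set of words in letters $x,y$ with $n_x$ $x$'s and $n_y$ $y$'s, $n=n_x+n_y$, $e=n_y-n_x$; $\mathcal{F}_n^e$ is its free $\mathbb{Z}$-span. Partial order: $w_0\le w_1$ iff for each $i$ the $i$-th $x$ of $w_0$ is at a position $\le$ that of the $i$-th $x$ of $w_1$. Bilinear form $\langle w_0|w_1\rangle=1$ if $w_0\le w_1$, else $0$; dot form $w_0\cdot w_1=1$ if $w_0=w_1$, else $0$. $Q_+,Q_-$ are the linear maps on $\mathcal{F}_n^e\otimes\mathbb{Q}$ with $u\cdot v=\langle u|Q_+v\rangle=\langle Q_-u|v\rangle$ for all $u,v$. $E^x_w$ is the set of occurrences of $x$ in $w$ immediately followed by a $y$; for $T\subseteq E^x_w$, $\psi^x_Tw$ replaces, for each $x\in T$, that $x$ and its following $y$ ($xy$) by $yx$. Similarly $E^y_w$ is the set of $y$'s immediately followed by an $x$, and $\psi^y_Tw$ replaces each such $yx$ ($y\in T$) by $xy$. *)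

theory Defs
  imports Complex_Main
begin

datatype letter = X | Y

type_synonym word = "letter list"

definition nocc :: "letter \<Rightarrow> word \<Rightarrow> nat" where
  "nocc a w = length (filter (\<lambda>c. c = a) w)"

definition Mset :: "nat \<Rightarrow> int \<Rightarrow> word set" where
  "Mset n e = {w. length w = n \<and> int (nocc Y w) - int (nocc X w) = e}"

(* positions (0-based) of the x's in w, in increasing order; the i-th entry
   is the position of the (i+1)-th x *)
definition xpositions :: "word \<Rightarrow> nat list" where
  "xpositions w = filter (\<lambda>j. w ! j = X) [0..<length w]"

definition wle :: "word \<Rightarrow> word \<Rightarrow> bool" where
  "wle w0 w1 \<longleftrightarrow> length (xpositions w0) = length (xpositions w1) \<and>
     (\<forall>i < length (xpositions w0). xpositions w0 ! i \<le> xpositions w1 ! i)"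

(* F_n^e \<otimes> Q: rational-valued coefficient functions supported on M_n^e *)
definition Vsp :: "nat \<Rightarrow> int \<Rightarrow> (word \<Rightarrow> rat) set" where
  "Vsp n e = {f. \<forall>w. w \<notin> Mset n e \<longrightarrow> f w = 0}"

definition delta :: "word \<Rightarrow> word \<Rightarrow> rat" where
  "delta w = (\<lambda>w'. if w' = w then 1 else 0)"

definition dotf :: "nat \<Rightarrow> int \<Rightarrow> (word \<Rightarrow> rat) \<Rightarrow> (word \<Rightarrow> rat) \<Rightarrow> rat" where
  "dotf n e u v = (\<Sum>w\<in>Mset n e. u w * v w)"

definition brak :: "nat \<Rightarrow> int \<Rightarrow> (word \<Rightarrow> rat) \<Rightarrow> (word \<Rightarrow> rat) \<Rightarrow> rat" where
  "brak n e u v = (\<Sum>w0\<in>Mset n e. \<Sum>w1\<in>Mset n e. if wle w0 w1 then u w0 * v w1 else 0)"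

definition linear_on_V :: "nat \<Rightarrow> int \<Rightarrow> ((word \<Rightarrow> rat) \<Rightarrow> (word \<Rightarrow> rat)) \<Rightarrow> bool" where
  "linear_on_V n e Q \<longleftrightarrow> (\<forall>v\<in>Vsp n e. Q v \<in> Vsp n e) \<and>
     (\<forall>a b. \<forall>u\<in>Vsp n e. \<forall>v\<in>Vsp n e.
        Q (\<lambda>w. a * u w + b * v w) = (\<lambda>w. a * Q u w + b * Q v w))"

definition is_Qplus :: "nat \<Rightarrow> int \<Rightarrow> ((word \<Rightarrow> rat) \<Rightarrow> (word \<Rightarrow> rat)) \<Rightarrow> bool" where
  "is_Qplus n e Q \<longleftrightarrow> linear_on_V n e Q \<and>
     (\<forall>u\<in>Vsp n e. \<forall>v\<in>Vsp n e. dotf n e u v = brak n e u (Q v))"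

definition is_Qminus :: "nat \<Rightarrow> int \<Rightarrow> ((word \<Rightarrow> rat) \<Rightarrow> (word \<Rightarrow> rat)) \<Rightarrow> bool" where
  "is_Qminus n e Q \<longleftrightarrow> linear_on_V n e Q \<and>
     (\<forall>u\<in>Vsp n e. \<forall>v\<in>Vsp n e. dotf n e u v = brak n e (Q u) v)"

definition Ex :: "word \<Rightarrow> nat set" where
  "Ex w = {i. Suc i < length w \<and> w ! i = X \<and> w ! Suc i = Y}"

definition Ey :: "word \<Rightarrow> nat set" where
  "Ey w = {i. Suc i < length w \<and> w ! i = Y \<and> w ! Suc i = X}"

(* swap the letters at positions i and i+1 for every i in T
   (for T \<subseteq> E^x_w this is psi^x_T, for T \<subseteq> E^y_w this is psi^y_T;
    such occurrences never overlap) *)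
definition psi :: "nat set \<Rightarrow> word \<Rightarrow> word" where
  "psi T w = map (\<lambda>j. if j \<in> T then w ! Suc j
                      else if 0 < j \<and> j - 1 \<in> T then w ! (j - 1)
                      else w ! j) [0..<length w]"

definition altsum :: "nat set \<Rightarrow> word \<Rightarrow> word \<Rightarrow> rat" where
  "altsum E w = (\<lambda>w'. \<Sum>T\<in>Pow E. (-1) ^ card T * (if psi T w = w' then 1 else 0))"

end

theory Submission
  imports Defs
begin

text \<open>
  Since \<open>u \<cdot> v = \<langle>u|Q\<^sub>+v\<rangle>\<close>, \<open>Q\<^sub>+\<close> is a right inverse of \<open>S f (a) = \<Sum>\<^bsub>b \<ge> a\<^esub> f b\<close>, which is
  unitriangular with respect to any grading strictly increasing along the order (minus the sum of
  all prefix counts of \<open>x\<close> will do). Hence \<open>S\<close> is invertible, \<open>Q\<^sub>+ = S\<^sup>-\<^sup>1\<close> and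
  \<open>Q\<^sub>+\<^sup>-\<^sup>1 w = \<Sum>\<^bsub>w' \<le> w\<^esub> w'\<close>, and the formula for \<open>Q\<^sub>+ w\<close> amounts to \<open>S (\<Sum>\<^sub>T (-1)\<^bsup>|T|\<^esup> \<psi>\<^sub>T w) = w\<close>.
  In terms of prefix counts of \<open>x\<close>, \<open>a \<le> \<psi>\<^sub>T w\<close> says that the counts of \<open>a\<close> dominate those of
  \<open>\<psi>\<^sub>T w\<close>, which are the counts of \<open>w\<close> raised by one right after each site in \<open>T\<close>. So the
  coefficient of \<open>a\<close> is zero unless the counts of \<open>a\<close> dominate those of \<open>w\<close>, and then it is the
  alternating sum over all subsets of the sites \<open>t \<in> E\<^sup>y\<^sub>w\<close> where \<open>a\<close> is strictly ahead at \<open>t + 1\<close>.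
  That sum vanishes unless there is no such site, and then \<open>a = w\<close>: an excess of \<open>a\<close> over \<open>w\<close>
  can only start right after a \<open>y\<close> of \<open>w\<close> and can only disappear after a \<open>yx\<close> of \<open>w\<close>.
  \<open>Q\<^sub>-\<close> is handled in the same way, with the order reversed and \<open>x\<close>, \<open>y\<close> exchanged.
\<close>

section \<open>Prefix counts and the swaps \<open>\<psi>\<close>\<close>

definition prefix_count :: "letter \<Rightarrow> word \<Rightarrow> nat \<Rightarrow> nat" where
  "prefix_count L w j = nocc L (take j w)"

lemma prefix_count_0 [simp]: "prefix_count L w 0 = 0"
  by (simp add: prefix_count_def nocc_def)

lemma prefix_count_Suc [simp]:
  "prefix_count L w (Suc j) = prefix_count L w j + of_bool (j < length w \<and> w ! j = L)"
  by (cases "j < length w") (simp_all add: prefix_count_def nocc_def take_Suc_conv_app_nth)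

lemma prefix_count_beyond: "length w \<le> j \<Longrightarrow> prefix_count L w j = nocc L w"
  by (simp add: prefix_count_def)

lemma prefix_count_min_length: "prefix_count L w (min j (length w)) = prefix_count L w j"
  by (simp add: prefix_count_def min_def)

lemma nocc_X_plus_nocc_Y: "nocc X w + nocc Y w = length w"
proof (induction w)
  case (Cons a w)
  then show ?case by (cases a) (simp_all add: nocc_def)
qed (simp add: nocc_def)

lemma other_letter:
  fixes c L L' :: letter
  shows "L \<noteq> L' \<Longrightarrow> c \<noteq> L \<Longrightarrow> c = L'"
  by (cases c; cases L; cases L') auto

lemma word_eq_if_prefix_count_eq:
  assumes "length u = length v" and "\<And>j. prefix_count L u j = prefix_count L v j"
  shows "u = v"
proof (rule nth_equalityI)
  fix i assume "i < length u"
  then have "(u ! i = L) = (v ! i = L)"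
    using assms(2)[of "Suc i"] assms by (simp add: of_bool_eq_iff)
  then show "u ! i = v ! i"
    by (metis other_letter)
qed fact

definition pair_sites :: "letter \<Rightarrow> letter \<Rightarrow> word \<Rightarrow> nat set" where
  "pair_sites a b w = {t. Suc t < length w \<and> w ! t = a \<and> w ! Suc t = b}"

lemma Ex_eq_pair_sites: "Ex w = pair_sites X Y w"
  by (simp add: Ex_def pair_sites_def)

lemma Ey_eq_pair_sites: "Ey w = pair_sites Y X w"
  by (simp add: Ey_def pair_sites_def)

lemma finite_pair_sites: "finite (pair_sites a b w)"
  by (rule finite_subset[of _ "{..<length w}"]) (auto simp: pair_sites_def)

lemma length_psi [simp]: "length (psi T w) = length w"
  by (simp add: psi_def)

lemma nth_psi:
  "j < length w \<Longrightarrow> psi T w ! j =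
     (if j \<in> T then w ! Suc j else if 0 < j \<and> j - 1 \<in> T then w ! (j - 1) else w ! j)"
  unfolding psi_def by (subst nth_map) auto

lemma prefix_count_psi:
  assumes "L' \<noteq> L" and "T \<subseteq> pair_sites L' L w"
  shows "prefix_count L (psi T w) j = prefix_count L w j + of_bool (j \<in> Suc ` T)"
proof (induction j)
  case (Suc j)
  have Suc_mem: "Suc j \<in> Suc ` T \<longleftrightarrow> j \<in> T" by auto
  consider (moved) "j \<in> T" | (target) "j \<in> Suc ` T" | (fixed) "j \<notin> T" "j \<notin> Suc ` T"
    by blast
  then show ?case
  proof cases
    case moved
    then have "j < length w" "w ! j = L'" "psi T w ! j = L" "j \<notin> Suc ` T"
      using assms by (auto simp: pair_sites_def nth_psi)
    with Suc moved assms(1) show ?thesis by (simp add: Suc_mem)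
  next
    case target
    then obtain t where "t \<in> T" "j = Suc t" by blast
    moreover have "j < length w" "w ! t = L'" "w ! j = L"
      using assms \<open>t \<in> T\<close> \<open>j = Suc t\<close> by (auto simp: pair_sites_def)
    moreover have "j \<notin> T"
      using assms \<open>w ! j = L\<close> by (auto simp: pair_sites_def)
    ultimately have "j < length w" "w ! j = L" "psi T w ! j = L'" "j \<notin> T"
      by (simp_all add: nth_psi)
    with Suc target assms(1) show ?thesis by (simp add: Suc_mem)
  next
    case fixed
    then have "psi T w ! j = w ! j" if "j < length w"
      using that by (auto simp: nth_psi image_iff)
    with Suc fixed assms(1) show ?thesis by (simp add: Suc_mem)
  qed
qed simp

lemma nocc_psi:
  assumes "L' \<noteq> L" and "T \<subseteq> pair_sites L' L w"
  shows "nocc L (psi T w) = nocc L w"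
proof -
  have "length w \<notin> Suc ` T"
    using assms(2) by (auto simp: pair_sites_def)
  then show ?thesis
    using prefix_count_psi[OF assms, of "length w"] by (simp add: prefix_count_beyond)
qed

lemma psi_in_Mset:
  assumes "L' \<noteq> L" and "T \<subseteq> pair_sites L' L w" and "w \<in> Mset n e"
  shows "psi T w \<in> Mset n e"
proof -
  have "nocc X (psi T w) = nocc X w \<and> nocc Y (psi T w) = nocc Y w"
    using nocc_psi[OF assms(1,2)] nocc_X_plus_nocc_Y[of w] nocc_X_plus_nocc_Y[of "psi T w"]
    by (cases L) auto
  then show ?thesis
    using assms(3) by (simp add: Mset_def)
qed

section \<open>The order on words in terms of prefix counts\<close>

lemma prefix_count_X_plus_Y: "prefix_count X w j + prefix_count Y w j = min j (length w)"
  using nocc_X_plus_nocc_Y[of "take j w"] by (simp add: prefix_count_def)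

lemma Mset_same_counts:
  assumes "u \<in> Mset n e" and "v \<in> Mset n e"
  shows "length u = length v" and "nocc X u = nocc X v" and "nocc Y u = nocc Y v"
  using assms nocc_X_plus_nocc_Y[of u] nocc_X_plus_nocc_Y[of v] by (auto simp: Mset_def)

lemma finite_Mset: "finite (Mset n e)"
proof (rule finite_subset)
  show "Mset n e \<subseteq> {w. set w \<subseteq> {X, Y} \<and> length w = n}"
    by (auto simp: Mset_def intro: letter.exhaust)
qed (simp add: finite_lists_length_eq)

lemma sorted_le_pointwise_iff_count_below:
  fixes p q :: "nat list"
  assumes p: "sorted p" and q: "sorted q" and len: "length p = length q"
  shows "(\<forall>i<length p. p ! i \<le> q ! i) \<longleftrightarrow>
    (\<forall>j. card {i. i < length q \<and> q ! i < j} \<le> card {i. i < length p \<and> p ! i < j})"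
proof (intro iffI allI impI)
  fix j assume "\<forall>i<length p. p ! i \<le> q ! i"
  then have "{i. i < length q \<and> q ! i < j} \<subseteq> {i. i < length p \<and> p ! i < j}"
    using len by (auto intro: le_less_trans)
  then show "card {i. i < length q \<and> q ! i < j} \<le> card {i. i < length p \<and> p ! i < j}"
    by (intro card_mono) auto
next
  fix i assume count: "\<forall>j. card {i. i < length q \<and> q ! i < j} \<le> card {i. i < length p \<and> p ! i < j}"
    and i: "i < length p"
  show "p ! i \<le> q ! i"
  proof (rule ccontr)
    assume less: "\<not> p ! i \<le> q ! i"
    let ?j = "Suc (q ! i)"
    have "{..i} \<subseteq> {i'. i' < length q \<and> q ! i' < ?j}"
      using i len sorted_nth_mono[OF q] by (auto simp: less_Suc_eq_le)
    then have "Suc i \<le> card {i'. i' < length q \<and> q ! i' < ?j}"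
      using card_mono[of "{i'. i' < length q \<and> q ! i' < ?j}" "{..i}"] by simp
    moreover have "{i'. i' < length p \<and> p ! i' < ?j} \<subseteq> {..<i}"
      using less sorted_nth_mono[OF p, of i] by (auto simp: less_Suc_eq_le) (meson le_trans not_le)
    then have "card {i'. i' < length p \<and> p ! i' < ?j} \<le> i"
      using card_mono[of "{..<i}"] by simp
    ultimately show False
      using count[rule_format, of ?j] by linarith
  qed
qed

lemma sorted_xpositions: "sorted (xpositions w)"
  by (simp add: xpositions_def sorted_wrt_filter)

lemma length_xpositions: "length (xpositions w) = nocc X w"
  unfolding xpositions_def nocc_def length_filter_conv_card
  by (rule arg_cong[where f = card]) auto

lemma card_xpositions_below:
  "card {i. i < length (xpositions w) \<and> xpositions w ! i < j} = prefix_count X w j"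
proof -
  have "card {i. i < length (xpositions w) \<and> xpositions w ! i < j}
      = length (filter (\<lambda>i. i < j) (xpositions w))"
    by (simp add: length_filter_conv_card)
  also have "\<dots> = length (filter (\<lambda>i. w ! i = X \<and> i < j) [0..<length w])"
    by (simp add: xpositions_def)
  also have "\<dots> = prefix_count X w j"
    unfolding prefix_count_def nocc_def length_filter_conv_card
    by (rule arg_cong[where f = card]) auto
  finally show ?thesis .
qed

lemma wle_iff_prefix_count_X:
  assumes "nocc X u = nocc X v"
  shows "wle u v \<longleftrightarrow> (\<forall>j. prefix_count X v j \<le> prefix_count X u j)"
  using sorted_le_pointwise_iff_count_below[OF sorted_xpositions sorted_xpositions, of u v] assms
  unfolding wle_def card_xpositions_below by (simp add: length_xpositions)

lemma wle_iff_prefix_count_Y: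
  assumes "length u = length v" and "nocc X u = nocc X v"
  shows "wle u v \<longleftrightarrow> (\<forall>j. prefix_count Y u j \<le> prefix_count Y v j)"
proof -
  have "prefix_count X v j \<le> prefix_count X u j \<longleftrightarrow> prefix_count Y u j \<le> prefix_count Y v j" for j
    using prefix_count_X_plus_Y[of u j] prefix_count_X_plus_Y[of v j] assms(1) by linarith
  then show ?thesis
    using wle_iff_prefix_count_X[OF assms(2)] by blast
qed

section \<open>The alternating sum over swap sites\<close>

lemma prefix_count_excess_persists:
  assumes "L' \<noteq> L"
    and sites: "\<And>t. t \<in> pair_sites L' L w \<Longrightarrow> prefix_count L v (Suc t) \<le> prefix_count L w (Suc t)"
    and start: "prefix_count L w (Suc k) < prefix_count L v (Suc k)" "w ! k = L'"
    and "Suc k \<le> m" "m \<le> length w"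
  shows "prefix_count L w m < prefix_count L v m \<and> w ! (m - 1) = L'"
  using assms(5,6)
proof (induction m rule: dec_induct)
  case (step m)
  then have m: "m < length w" "0 < m" and "Suc (m - 1) = m" by auto
  have "w ! m \<noteq> L"
  proof
    assume "w ! m = L"
    then have "m - 1 \<in> pair_sites L' L w"
      using step m by (simp add: pair_sites_def)
    with sites step show False
      using \<open>Suc (m - 1) = m\<close> by fastforce
  qed
  then have "w ! m = L'"
    using other_letter[of L L' "w ! m"] assms(1) by blast
  with step \<open>w ! m \<noteq> L\<close> show ?case
    by simp
qed (use start in simp)

lemma word_eq_if_no_excess_at_pair_sites:
  assumes "L' \<noteq> L" and len: "length v = length w" and total: "nocc L v = nocc L w"
    and below: "\<And>j. prefix_count L w j \<le> prefix_count L v j"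
    and sites: "\<And>t. t \<in> pair_sites L' L w \<Longrightarrow> prefix_count L v (Suc t) \<le> prefix_count L w (Suc t)"
  shows "v = w"
proof -
  have "prefix_count L v j \<le> prefix_count L w j" for j
  proof (induction j)
    case (Suc k)
    show ?case
    proof (rule ccontr)
      assume exceeds: "\<not> prefix_count L v (Suc k) \<le> prefix_count L w (Suc k)"
      with Suc below[of k] len have "k < length w" "w ! k \<noteq> L"
        by (auto split: if_splits)
      moreover from this have "w ! k = L'"
        using other_letter[of L L' "w ! k"] assms(1) by blast
      ultimately have "prefix_count L w (length w) < prefix_count L v (length w)"
        using prefix_count_excess_persists[OF assms(1) sites, of k "length w"] exceeds by simp
      with total len show False
        by (simp add: prefix_count_beyond)
    qed
  qed simp
  then show ?thesis
    using word_eq_if_prefix_count_eq[OF len, of L] below le_antisym by metis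
qed

lemma sum_Pow_minus_one_power_card:
  assumes "finite A"
  shows "(\<Sum>T\<in>Pow A. (-1::'a::ring_1) ^ card T) = of_bool (A = {})"
proof (cases "A = {}")
  case False
  then show ?thesis
    using sum_alternating_cancels[of "Pow A" card] card_subsupersets_even_odd[of A "{}"] assms
    by (simp add: Pow_def less_le)
qed simp

lemma alternating_sum_over_pair_sites:
  assumes "L' \<noteq> L" and "length v = length w" and "nocc L v = nocc L w"
  shows "(\<Sum>T\<in>Pow (pair_sites L' L w).
            (-1) ^ card T * of_bool (\<forall>j. prefix_count L (psi T w) j \<le> prefix_count L v j))
    = (of_bool (v = w) :: 'a::ring_1)"
proof -
  define E where "E = pair_sites L' L w"
  define below where "below \<longleftrightarrow> (\<forall>j. prefix_count L w j \<le> prefix_count L v j)"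
  define excess where "excess = {t. prefix_count L w (Suc t) < prefix_count L v (Suc t)}"
  have dominated_iff: "(\<forall>j. prefix_count L (psi T w) j \<le> prefix_count L v j)
      \<longleftrightarrow> below \<and> T \<subseteq> excess" if "T \<subseteq> E" for T
  proof -
    note shifted = prefix_count_psi[OF assms(1) that[unfolded E_def]]
    show ?thesis
    proof
      assume dominated: "\<forall>j. prefix_count L (psi T w) j \<le> prefix_count L v j"
      have below
        unfolding below_def
      proof
        fix j
        show "prefix_count L w j \<le> prefix_count L v j"
          using dominated[rule_format, of j] shifted[of j] by linarith
      qed
      moreover have "T \<subseteq> excess"
      proof
        fix t assume "t \<in> T"
        then show "t \<in> excess"
          using dominated[rule_format, of "Suc t"] shifted[of "Suc t"] by (simp add: excess_def)
      qed
      ultimately show "below \<and> T \<subseteq> excess" ..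
    next
      assume "below \<and> T \<subseteq> excess"
      then show "\<forall>j. prefix_count L (psi T w) j \<le> prefix_count L v j"
        using shifted by (auto simp: below_def excess_def Suc_le_eq)
    qed
  qed
  have "finite E"
    by (simp add: E_def finite_pair_sites)
  have "(\<Sum>T\<in>Pow E. (-1) ^ card T * of_bool (\<forall>j. prefix_count L (psi T w) j \<le> prefix_count L v j))
      = (\<Sum>T\<in>Pow E. if below \<and> T \<subseteq> excess then (-1) ^ card T else (0::'a))"
    by (rule sum.cong) (simp_all add: dominated_iff)
  also have "\<dots> = of_bool below * (\<Sum>T\<in>Pow (E \<inter> excess). (-1) ^ card T)"
  proof -
    have "{T \<in> Pow E. T \<subseteq> excess} = Pow (E \<inter> excess)"
      by auto
    then show ?thesis
      using sum.inter_filter[of "Pow E" "\<lambda>T. (-1) ^ card T" "\<lambda>T. T \<subseteq> excess", symmetric]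
        \<open>finite E\<close>
      by (cases below) simp_all
  qed
  also have "\<dots> = of_bool below * of_bool (E \<inter> excess = {})"
    using \<open>finite E\<close> by (simp add: sum_Pow_minus_one_power_card del: Pow_Int_eq)
  also have "of_bool below * of_bool (E \<inter> excess = {}) = (of_bool (v = w) :: 'a)"
  proof -
    have "below \<and> E \<inter> excess = {} \<longleftrightarrow> v = w"
    proof
      assume "below \<and> E \<inter> excess = {}"
      then show "v = w"
        by (intro word_eq_if_no_excess_at_pair_sites[OF assms])
          (auto simp: below_def excess_def E_def not_less)
    qed (simp add: below_def excess_def)
    then show ?thesis by (simp flip: of_bool_conj)
  qed
  finally show ?thesis unfolding E_def .
qed

section \<open>Inverting summation over upper sets\<close>

definition supported_on :: "'a set \<Rightarrow> ('a \<Rightarrow> rat) set" where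
  "supported_on M = {f. \<forall>x. x \<notin> M \<longrightarrow> f x = 0}"

text \<open>In coefficient form, \<open>sum_above (Mset n e) wle\<close> is the map \<open>w \<mapsto> \<Sum>\<^bsub>w' \<le> w\<^esub> w'\<close> and
  \<open>sum_above (Mset n e) wle\<inverse>\<inverse>\<close> the map \<open>w \<mapsto> \<Sum>\<^bsub>w' \<ge> w\<^esub> w'\<close>.\<close>

definition sum_above :: "'a set \<Rightarrow> ('a \<Rightarrow> 'a \<Rightarrow> bool) \<Rightarrow> ('a \<Rightarrow> rat) \<Rightarrow> 'a \<Rightarrow> rat" where
  "sum_above M R f a = (if a \<in> M then \<Sum>b | b \<in> M \<and> R a b. f b else 0)"

lemma Vsp_eq_supported_on: "Vsp n e = supported_on (Mset n e)"
  by (simp add: Vsp_def supported_on_def)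

lemma delta_supported_on: "w \<in> M \<Longrightarrow> delta w \<in> supported_on M"
  by (simp add: delta_def supported_on_def)

lemma sum_delta_mult: "finite M \<Longrightarrow> a \<in> M \<Longrightarrow> (\<Sum>w\<in>M. delta a w * f w) = f a"
proof -
  assume "finite M" "a \<in> M"
  have "(\<Sum>w\<in>M. delta a w * f w) = (\<Sum>w\<in>M. if w = a then f w else 0)"
    by (intro sum.cong) (simp_all add: delta_def)
  with \<open>finite M\<close> \<open>a \<in> M\<close> show ?thesis by simp
qed

lemma sum_above_supported_on: "sum_above M R f \<in> supported_on M"
  by (simp add: sum_above_def supported_on_def)

lemma sum_above_eqI:
  assumes v: "v \<in> supported_on M" and "finite M"
    and coeff: "\<And>a. a \<in> M \<Longrightarrow> v a = sum_above M R g a"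
  shows "sum_above M R g = v"
proof
  fix a show "sum_above M R g a = v a"
    using coeff[of a] v by (cases "a \<in> M") (simp_all add: sum_above_def supported_on_def)
qed

lemma sum_above_delta:
  "finite M \<Longrightarrow> w \<in> M \<Longrightarrow> sum_above M R (delta w) = (\<lambda>a. if a \<in> M \<and> R a w then 1 else 0)"
  by (auto simp: sum_above_def delta_def fun_eq_iff)

lemma sum_above_diff:
  "finite M \<Longrightarrow> sum_above M R (\<lambda>x. f x - g x) a = sum_above M R f a - sum_above M R g a"
  by (simp add: sum_above_def sum_subtractf)

lemma sum_above_expansion:
  assumes "finite M" and A: "\<And>w. w \<in> M \<Longrightarrow> sum_above M R (A w) = delta w"
    and v: "v \<in> supported_on M"
  shows "sum_above M R (\<lambda>a. \<Sum>w\<in>M. v w * A w a) = v"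
proof
  fix a
  show "sum_above M R (\<lambda>a. \<Sum>w\<in>M. v w * A w a) a = v a"
  proof (cases "a \<in> M")
    case True
    have "sum_above M R (\<lambda>a. \<Sum>w\<in>M. v w * A w a) a = (\<Sum>w\<in>M. v w * sum_above M R (A w) a)"
      using True by (simp add: sum_above_def sum_distrib_left sum.swap[of _ M])
    also have "\<dots> = (\<Sum>w\<in>M. delta a w * v w)"
      using A by (intro sum.cong) (auto simp: delta_def)
    finally show ?thesis
      using True assms(1) by (simp add: sum_delta_mult)
  qed (use v in \<open>simp add: sum_above_def supported_on_def\<close>)
qed

locale graded_relation =
  fixes M :: "'a set" and R :: "'a \<Rightarrow> 'a \<Rightarrow> bool" and grade :: "'a \<Rightarrow> int"
  assumes finite_M: "finite M"
    and refl: "a \<in> M \<Longrightarrow> R a a"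
    and grade_less: "a \<in> M \<Longrightarrow> b \<in> M \<Longrightarrow> R a b \<Longrightarrow> a \<noteq> b \<Longrightarrow> grade a < grade b"
begin

text \<open>The support of a nonzero \<open>f\<close> has an element of maximal grade, at which \<open>sum_above\<close>
  picks out \<open>f\<close> alone.\<close>

lemma sum_above_eq_0_imp_eq_0:
  assumes f: "f \<in> supported_on M" and zero: "sum_above M R f = (\<lambda>_. 0)"
  shows "f = (\<lambda>_. 0)"
proof (rule ccontr)
  define S where "S = {x \<in> M. f x \<noteq> 0}"
  assume "f \<noteq> (\<lambda>_. 0)"
  then have "S \<noteq> {}"
    using f by (auto simp: S_def supported_on_def)
  moreover have "finite S"
    using finite_M by (simp add: S_def)
  ultimately have "Max (grade ` S) \<in> grade ` S"
    by (intro Max_in) auto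
  then obtain m where m: "m \<in> S" and "grade m = Max (grade ` S)"
    by (metis imageE)
  with \<open>finite S\<close> have top: "grade x \<le> grade m" if "x \<in> S" for x
    using that by simp
  have "f b = 0" if "b \<in> M" "R m b" "b \<noteq> m" for b
  proof -
    have "grade m < grade b"
      using grade_less m that by (simp add: S_def)
    then have "b \<notin> S"
      using top by fastforce
    with \<open>b \<in> M\<close> show ?thesis
      by (simp add: S_def)
  qed
  then have "sum_above M R f m = (\<Sum>b\<in>{m}. f b)"
    unfolding sum_above_def using m finite_M refl
    by (intro if_P[THEN trans] sum.mono_neutral_right) (auto simp: S_def)
  then show False
    using zero m by (simp add: S_def fun_eq_iff)
qed

lemma inj_on_sum_above: "inj_on (sum_above M R) (supported_on M)"
proof (rule inj_onI)
  fix f g assume "f \<in> supported_on M" "g \<in> supported_on M" "sum_above M R f = sum_above M R g"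
  then have "(\<lambda>x. f x - g x) \<in> supported_on M" "sum_above M R (\<lambda>x. f x - g x) = (\<lambda>_. 0)"
    by (simp_all add: supported_on_def sum_above_diff finite_M fun_eq_iff)
  then have "(\<lambda>x. f x - g x) = (\<lambda>_. 0)"
    by (rule sum_above_eq_0_imp_eq_0)
  then show "f = g"
    by (simp add: fun_eq_iff)
qed

lemma right_inverse_of_sum_above:
  assumes maps: "\<And>v. v \<in> supported_on M \<Longrightarrow> Q v \<in> supported_on M"
    and inverse: "\<And>v. v \<in> supported_on M \<Longrightarrow> sum_above M R (Q v) = v"
  shows "bij_betw Q (supported_on M) (supported_on M)"
    and "\<And>f. f \<in> supported_on M \<Longrightarrow> Q (sum_above M R f) = f"
proof -
  show left: "Q (sum_above M R f) = f" if "f \<in> supported_on M" for f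
    using inj_onD[OF inj_on_sum_above] maps inverse sum_above_supported_on that by blast
  show "bij_betw Q (supported_on M) (supported_on M)"
  proof (rule bij_betw_byWitness[where f' = "sum_above M R"])
    show "sum_above M R ` supported_on M \<subseteq> supported_on M"
      using sum_above_supported_on by blast
  qed (use maps inverse left in auto)
qed

end

lemma wle_imp_prefix_count_sum_less:
  assumes u: "u \<in> Mset n e" and v: "v \<in> Mset n e" and "wle u v" and "u \<noteq> v"
  shows "(\<Sum>j\<le>n. prefix_count X v j) < (\<Sum>j\<le>n. prefix_count X u j)"
proof (rule sum_strict_mono_ex1)
  have le: "prefix_count X v j \<le> prefix_count X u j" for j
    using assms(3) wle_iff_prefix_count_X[OF Mset_same_counts(2)[OF u v]] by blast
  then show "\<forall>j\<in>{..n}. prefix_count X v j \<le> prefix_count X u j"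
    by blast
  have len: "length u = n" "length v = n"
    using u v by (simp_all add: Mset_def)
  obtain j where "prefix_count X v j \<noteq> prefix_count X u j"
    using word_eq_if_prefix_count_eq[of v u X] len \<open>u \<noteq> v\<close> by auto
  then have "prefix_count X v (min j n) < prefix_count X u (min j n)"
    using le[of j] len prefix_count_min_length[of X u j] prefix_count_min_length[of X v j] by simp
  then show "\<exists>j\<in>{..n}. prefix_count X v j < prefix_count X u j"
    by fastforce
qed simp

lemma graded_relation_wle:
  "graded_relation (Mset n e) wle (\<lambda>w. - int (\<Sum>j\<le>n. prefix_count X w j))"
  by unfold_locales
    (simp_all add: finite_Mset wle_def wle_imp_prefix_count_sum_less del: of_nat_sum)

lemma graded_relation_wle_conversep:
  "graded_relation (Mset n e) wle\<inverse>\<inverse> (\<lambda>w. int (\<Sum>j\<le>n. prefix_count X w j))"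
  by unfold_locales
    (simp_all add: finite_Mset wle_def wle_imp_prefix_count_sum_less del: of_nat_sum)

lemma brak_eq_sum_above:
  "brak n e u g = (\<Sum>a\<in>Mset n e. u a * sum_above (Mset n e) wle g a)"
  unfolding brak_def sum_above_def
  by (intro sum.cong refl)
    (simp add: sum.inter_filter[symmetric] finite_Mset sum_distrib_left)

lemma brak_eq_sum_above_conversep:
  "brak n e g v = (\<Sum>b\<in>Mset n e. sum_above (Mset n e) wle\<inverse>\<inverse> g b * v b)"
  unfolding brak_def sum_above_def
  by (subst sum.swap, intro sum.cong refl)
    (simp add: sum.inter_filter[symmetric] finite_Mset sum_distrib_right)

lemma is_Qplus_iff:
  "is_Qplus n e Q \<longleftrightarrow> linear_on_V n e Q \<and> (\<forall>v\<in>Vsp n e. sum_above (Mset n e) wle (Q v) = v)"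
proof (intro iffI conjI ballI)
  fix v assume Q: "is_Qplus n e Q" and v: "v \<in> Vsp n e"
  show "sum_above (Mset n e) wle (Q v) = v"
  proof (rule sum_above_eqI)
    fix a assume a: "a \<in> Mset n e"
    have "dotf n e (delta a) v = brak n e (delta a) (Q v)"
      using Q v delta_supported_on[OF a] by (simp add: is_Qplus_def Vsp_eq_supported_on)
    then show "v a = sum_above (Mset n e) wle (Q v) a"
      using a by (simp add: dotf_def brak_eq_sum_above sum_delta_mult finite_Mset)
  qed (use v in \<open>simp_all add: Vsp_eq_supported_on finite_Mset\<close>)
qed (auto simp: is_Qplus_def dotf_def brak_eq_sum_above)

lemma is_Qminus_iff:
  "is_Qminus n e Q \<longleftrightarrow> linear_on_V n e Q \<and> (\<forall>v\<in>Vsp n e. sum_above (Mset n e) wle\<inverse>\<inverse> (Q v) = v)"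
proof (intro iffI conjI ballI)
  fix u assume Q: "is_Qminus n e Q" and u: "u \<in> Vsp n e"
  show "sum_above (Mset n e) wle\<inverse>\<inverse> (Q u) = u"
  proof (rule sum_above_eqI)
    fix a assume a: "a \<in> Mset n e"
    have "dotf n e u (delta a) = brak n e (Q u) (delta a)"
      using Q u delta_supported_on[OF a] by (simp add: is_Qminus_def Vsp_eq_supported_on)
    then show "u a = sum_above (Mset n e) wle\<inverse>\<inverse> (Q u) a"
      using a sum_delta_mult[OF finite_Mset a]
      by (simp add: dotf_def brak_eq_sum_above_conversep mult.commute)
  qed (use u in \<open>simp_all add: Vsp_eq_supported_on finite_Mset\<close>)
qed (auto simp: is_Qminus_def dotf_def brak_eq_sum_above_conversep mult.commute)

lemma altsum_supported_on:
  "(\<And>T. T \<subseteq> E \<Longrightarrow> psi T w \<in> M) \<Longrightarrow> altsum E w \<in> supported_on M"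
  by (auto simp: altsum_def supported_on_def intro!: sum.neutral)

lemma altsum_Ints: "altsum E w w' \<in> \<int>"
  unfolding altsum_def by (intro Ints_sum Ints_mult Ints_power) auto

lemma sum_above_altsum:
  assumes "finite M" and "finite E" and psi: "\<And>T. T \<subseteq> E \<Longrightarrow> psi T w \<in> M" and "a \<in> M"
  shows "sum_above M R (altsum E w) a = (\<Sum>T\<in>Pow E. (-1) ^ card T * of_bool (R a (psi T w)))"
proof -
  have "sum_above M R (altsum E w) a
      = (\<Sum>T\<in>Pow E. (-1) ^ card T * (\<Sum>b | b \<in> M \<and> R a b. if psi T w = b then 1 else 0))"
    using \<open>a \<in> M\<close> by (simp add: sum_above_def altsum_def sum_distrib_left sum.swap[of _ _ "Pow E"])
  also have "\<dots> = (\<Sum>T\<in>Pow E. (-1) ^ card T * of_bool (R a (psi T w)))"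
    using psi \<open>finite M\<close> by (intro sum.cong refl) simp
  finally show ?thesis .
qed

lemma sum_above_altsum_pair_sites:
  assumes "L' \<noteq> L" and w: "w \<in> Mset n e"
    and R: "\<And>a b. a \<in> Mset n e \<Longrightarrow> b \<in> Mset n e \<Longrightarrow>
              R a b \<longleftrightarrow> (\<forall>j. prefix_count L b j \<le> prefix_count L a j)"
  shows "sum_above (Mset n e) R (altsum (pair_sites L' L w) w) = delta w"
proof
  fix a
  have psi: "psi T w \<in> Mset n e" if "T \<subseteq> pair_sites L' L w" for T
    using psi_in_Mset[OF assms(1) that w] .
  show "sum_above (Mset n e) R (altsum (pair_sites L' L w) w) a = delta w a"
  proof (cases "a \<in> Mset n e")
    case True
    have counts: "length a = length w" "nocc L a = nocc L w"
      using Mset_same_counts[OF True w] by (cases L; simp)+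
    have "sum_above (Mset n e) R (altsum (pair_sites L' L w) w) a
        = (\<Sum>T\<in>Pow (pair_sites L' L w). (-1) ^ card T * of_bool (R a (psi T w)))"
      by (rule sum_above_altsum[OF finite_Mset finite_pair_sites psi True])
    also have "\<dots> = (\<Sum>T\<in>Pow (pair_sites L' L w).
             (-1) ^ card T * of_bool (\<forall>j. prefix_count L (psi T w) j \<le> prefix_count L a j))"
      by (intro sum.cong refl) (simp add: R[OF True psi])
    also have "\<dots> = of_bool (a = w)"
      by (rule alternating_sum_over_pair_sites[OF assms(1) counts])
    finally show ?thesis
      by (simp add: delta_def)
  qed (use w in \<open>auto simp: sum_above_def delta_def\<close>)
qed

lemma sum_above_altsum_Ey:
  assumes "w \<in> Mset n e"
  shows "sum_above (Mset n e) wle (altsum (Ey w) w) = delta w"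
proof -
  have "wle a b \<longleftrightarrow> (\<forall>j. prefix_count X b j \<le> prefix_count X a j)"
    if "a \<in> Mset n e" "b \<in> Mset n e" for a b
    by (rule wle_iff_prefix_count_X[OF Mset_same_counts(2)[OF that]])
  then show ?thesis
    unfolding Ey_eq_pair_sites by (rule sum_above_altsum_pair_sites[rotated, OF assms]) simp_all
qed

lemma sum_above_altsum_Ex:
  assumes "w \<in> Mset n e"
  shows "sum_above (Mset n e) wle\<inverse>\<inverse> (altsum (Ex w) w) = delta w"
proof -
  have "wle\<inverse>\<inverse> a b \<longleftrightarrow> (\<forall>j. prefix_count Y b j \<le> prefix_count Y a j)"
    if "a \<in> Mset n e" "b \<in> Mset n e" for a b
    using wle_iff_prefix_count_Y[OF Mset_same_counts(1,2)[OF that(2,1)]] by simp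
  then show ?thesis
    unfolding Ex_eq_pair_sites by (rule sum_above_altsum_pair_sites[rotated, OF assms]) simp_all
qed

lemma linear_on_V_expansion:
  assumes "\<And>w. w \<in> Mset n e \<Longrightarrow> A w \<in> Vsp n e"
  shows "linear_on_V n e (\<lambda>v a. \<Sum>w\<in>Mset n e. v w * A w a)"
  using assms
  by (auto simp: linear_on_V_def Vsp_def fun_eq_iff sum.distrib sum_distrib_left
      distrib_right mult.assoc intro!: sum.neutral)

lemma exists_right_inverse_of_sum_above:
  assumes "\<And>w. w \<in> Mset n e \<Longrightarrow> A w \<in> Vsp n e"
    and "\<And>w. w \<in> Mset n e \<Longrightarrow> sum_above (Mset n e) R (A w) = delta w"
  shows "\<exists>Q. linear_on_V n e Q \<and> (\<forall>v\<in>Vsp n e. sum_above (Mset n e) R (Q v) = v)"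
proof -
  have "linear_on_V n e (\<lambda>v a. \<Sum>w\<in>Mset n e. v w * A w a)"
    by (rule linear_on_V_expansion) (rule assms(1))
  moreover have "\<forall>v\<in>Vsp n e. sum_above (Mset n e) R (\<lambda>a. \<Sum>w\<in>Mset n e. v w * A w a) = v"
    using sum_above_expansion[OF finite_Mset assms(2)] by (simp add: Vsp_eq_supported_on)
  ultimately show ?thesis
    by blast
qed

lemma right_inverse_of_sum_above_properties:
  assumes "graded_relation (Mset n e) R grade"
    and A: "\<And>w. w \<in> Mset n e \<Longrightarrow> A w \<in> Vsp n e"
      "\<And>w. w \<in> Mset n e \<Longrightarrow> sum_above (Mset n e) R (A w) = delta w"
    and A_Ints: "\<And>w w'. A w w' \<in> \<int>"
    and Q: "linear_on_V n e Q" "\<forall>v\<in>Vsp n e. sum_above (Mset n e) R (Q v) = v"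
  shows "bij_betw Q (Vsp n e) (Vsp n e) \<and>
      (\<forall>w\<in>Mset n e. Q (delta w) = A w \<and>
         Q (\<lambda>w'. if w' \<in> Mset n e \<and> R w' w then 1 else 0) = delta w \<and>
         (\<forall>w'. Q (delta w) w' \<in> \<int>))"
proof -
  interpret graded_relation "Mset n e" R grade by fact
  have "\<And>v. v \<in> supported_on (Mset n e) \<Longrightarrow> Q v \<in> supported_on (Mset n e)"
    using Q(1) by (simp add: linear_on_V_def Vsp_eq_supported_on)
  note inverse = right_inverse_of_sum_above[OF this Q(2)[unfolded Vsp_eq_supported_on, rule_format]]
  have "Q (delta w) = A w" if "w \<in> Mset n e" for w
    using inverse(2)[of "A w"] A that by (simp add: Vsp_eq_supported_on)
  with inverse A_Ints show ?thesis
    by (simp add: Vsp_eq_supported_on sum_above_delta[OF finite_Mset, symmetric]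
        delta_supported_on)
qed

lemma altsum_Ey_in_Vsp: "w \<in> Mset n e \<Longrightarrow> altsum (Ey w) w \<in> Vsp n e"
  unfolding Vsp_eq_supported_on Ey_eq_pair_sites
  by (intro altsum_supported_on psi_in_Mset[of Y X]) simp_all

lemma altsum_Ex_in_Vsp: "w \<in> Mset n e \<Longrightarrow> altsum (Ex w) w \<in> Vsp n e"
  unfolding Vsp_eq_supported_on Ex_eq_pair_sites
  by (intro altsum_supported_on psi_in_Mset[of X Y]) simp_all

lemma exists_Qplus: "\<exists>Q. is_Qplus n e Q"
  unfolding is_Qplus_iff
  by (rule exists_right_inverse_of_sum_above[where A = "\<lambda>w. altsum (Ey w) w"])
    (simp_all add: altsum_Ey_in_Vsp sum_above_altsum_Ey)

lemma exists_Qminus: "\<exists>Q. is_Qminus n e Q"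
  unfolding is_Qminus_iff
  by (rule exists_right_inverse_of_sum_above[where A = "\<lambda>w. altsum (Ex w) w"])
    (simp_all add: altsum_Ex_in_Vsp sum_above_altsum_Ex)

lemma Qplus_properties:
  assumes "is_Qplus n e Q"
  shows "bij_betw Q (Vsp n e) (Vsp n e) \<and>
    (\<forall>w\<in>Mset n e. Q (delta w) = altsum (Ey w) w \<and>
       Q (\<lambda>w'. if w' \<in> Mset n e \<and> wle w' w then 1 else 0) = delta w \<and>
       (\<forall>w'. Q (delta w) w' \<in> \<int>))"
  using assms unfolding is_Qplus_iff
  by (intro right_inverse_of_sum_above_properties[OF graded_relation_wle])
    (simp_all add: altsum_Ey_in_Vsp sum_above_altsum_Ey altsum_Ints)

lemma Qminus_properties:
  assumes "is_Qminus n e Q"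
  shows "bij_betw Q (Vsp n e) (Vsp n e) \<and>
    (\<forall>w\<in>Mset n e. Q (delta w) = altsum (Ex w) w \<and>
       Q (\<lambda>w'. if w' \<in> Mset n e \<and> wle w w' then 1 else 0) = delta w \<and>
       (\<forall>w'. Q (delta w) w' \<in> \<int>))"
  using assms unfolding is_Qminus_iff
  by (intro right_inverse_of_sum_above_properties[OF graded_relation_wle_conversep, simplified])
    (simp_all add: altsum_Ex_in_Vsp sum_above_altsum_Ex altsum_Ints)

theorem mainTheorem5:
  fixes n :: nat and e :: int
  shows "(\<exists>Q. is_Qplus n e Q) \<and> (\<exists>Q. is_Qminus n e Q) \<and>
    (\<forall>Q. is_Qplus n e Q \<longrightarrow>
       bij_betw Q (Vsp n e) (Vsp n e) \<and>
       (\<forall>w\<in>Mset n e.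
          Q (delta w) = altsum (Ey w) w \<and>
          Q (\<lambda>w'. if w' \<in> Mset n e \<and> wle w' w then 1 else 0) = delta w \<and>
          (\<forall>w'. Q (delta w) w' \<in> \<int>))) \<and>
    (\<forall>Q. is_Qminus n e Q \<longrightarrow>
       bij_betw Q (Vsp n e) (Vsp n e) \<and>
       (\<forall>w\<in>Mset n e.
          Q (delta w) = altsum (Ex w) w \<and>
          Q (\<lambda>w'. if w' \<in> Mset n e \<and> wle w w' then 1 else 0) = delta w \<and>
          (\<forall>w'. Q (delta w) w' \<in> \<int>)))"
  using exists_Qplus exists_Qminus Qplus_properties Qminus_properties by blast

end
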